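(* Let $k\ge1$ and let $\varphi_k,\psi_k,G_{k-1},H_{k-1}$ be as defined below. If $g\in G_{k-1}$ is a product of two squares in $\mathbb{F}_2$ (i.e. $g=a^2b^2$ with $a,b\in\mathbb{F}_2$), then $\varphi_k(g)$ is even. Likewise, if $g\in H_{k-1}$ is a product of two squares in $\mathbb{F}_2$, then $\psi_k(g)$ is even.
   Context: $\mathbb{F}_2$ is the free group on $x,y$. Let $\tilde K$ be the graph with vertex set $\mathbb{Z}^2$ and oriented edges $x^iy^jX$ from $(i,j)$ to $(i+1,j)$ and $x^iy^jY$ from $(i,j)$ to $(i,j+1)$. A $1$-chain is written $\alpha=P_\alpha(x,y)X+Q_\alpha(x,y)Y$ with $P_\alpha,Q_\alpha$ integer Laurent polynomials (coefficient of $x^iy^j$ in $P_\alpha$ = coefficient of edge $x^iy^jX$, similarly for $Q_\alpha$). For $g\in[\mathbb{F}_2,\mathbb{F}_2]$ written as a word in $x^{\pm1},y^{\pm1}$, the cycle $\alpha_g$ is the $1$-cycle traced by the lattice path from $(0,0)$ in which $x,x^{-1},y,y^{-1}$ move by $(1,0),(-1,0),(0,1),(0,-1)$ along the corresponding edges, each edge counted with sign $+1$ if traversed in its orientation and $-1$ otherwise; its homology class depends only on $g$. Put $f_g(y)=P_{\alpha_g}(1,y)$ and $g_g(x)=Q_{\alpha_g}(x,1)$. Set $G_0=H_0=[\mathbb{F}_2,\mathbb{F}_2]$ and inductively, for $k\ge1$, $\varphi_k(g)=f_g^{(k)}(1)/k!$ for $g\in G_{k-1}$, $\psi_k(g)=g_g^{(k)}(1)/k!$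 for $g\in H_{k-1}$ (integers), $G_k=\ker\varphi_k$, $H_k=\ker\psi_k$. These $\varphi_k,\psi_k$ are group homomorphisms to $\mathbb{Z}$. *)

theory Defs
  imports "HOL-Analysis.Analysis"
begin

datatype gen = GX | GY

text \<open>A letter is a generator with a sign: (GX, True) = x, (GX, False) = x^-1, etc.
  Elements of F_2 are represented by words (lists of letters) modulo free reduction.\<close>
type_synonym letter = "gen \<times> bool"
type_synonym word = "letter list"

definition inv_letter :: "letter \<Rightarrow> letter" where
  "inv_letter l = (fst l, \<not> snd l)"

definition inv_word :: "word \<Rightarrow> word" where
  "inv_word w = rev (map inv_letter w)"

inductive cancel1 :: "word \<Rightarrow> word \<Rightarrow> bool" where
  "cancel1 (u @ [l, inv_letter l] @ v) (u @ v)"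

definition free_eq :: "word \<Rightarrow> word \<Rightarrow> bool" where
  "free_eq = equivclp cancel1"

definition commutator :: "word \<Rightarrow> word \<Rightarrow> word" where
  "commutator a b = a @ b @ inv_word a @ inv_word b"

definition in_comm :: "word \<Rightarrow> bool" where
  "in_comm w \<longleftrightarrow> (\<exists>cs. free_eq w (concat (map (\<lambda>(a,b). commutator a b) cs)))"

text \<open>Edges: (i, j, GX) is the edge x^i y^j X from (i,j) to (i+1,j);
  (i, j, GY) is the edge x^i y^j Y from (i,j) to (i,j+1).\<close>
type_synonym edge = "int \<times> int \<times> gen"

fun step_edge :: "int \<times> int \<Rightarrow> letter \<Rightarrow> edge \<times> int \<times> (int \<times> int)" where
  "step_edge (i,j) (GX, True)  = ((i, j, GX), 1, (i+1, j))"
| "step_edge (i,j) (GX, False) = ((i-1, j, GX), -1, (i-1, j))"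
| "step_edge (i,j) (GY, True)  = ((i, j, GY), 1, (i, j+1))"
| "step_edge (i,j) (GY, False) = ((i, j-1, GY), -1, (i, j-1))"

fun chain_from :: "int \<times> int \<Rightarrow> word \<Rightarrow> edge \<Rightarrow> int" where
  "chain_from p [] = (\<lambda>e. 0)"
| "chain_from p (l # w) =
     (case step_edge p l of (e, s, q) \<Rightarrow> (\<lambda>e'. (if e' = e then s else 0) + chain_from q w e'))"

fun edges_from :: "int \<times> int \<Rightarrow> word \<Rightarrow> edge list" where
  "edges_from p [] = []"
| "edges_from p (l # w) = (case step_edge p l of (e, s, q) \<Rightarrow> e # edges_from q w)"

definition alpha :: "word \<Rightarrow> edge \<Rightarrow> int" where
  "alpha w = chain_from (0,0) w"

text \<open>The support of alpha w is contained in the (finite) set of traversed edges.\<close>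
definition P_alpha :: "word \<Rightarrow> real \<Rightarrow> real \<Rightarrow> real" where
  "P_alpha w x y = (\<Sum>e\<in>{e \<in> set (edges_from (0,0) w). snd (snd e) = GX}.
      of_int (alpha w e) * x powi (fst e) * y powi (fst (snd e)))"

definition Q_alpha :: "word \<Rightarrow> real \<Rightarrow> real \<Rightarrow> real" where
  "Q_alpha w x y = (\<Sum>e\<in>{e \<in> set (edges_from (0,0) w). snd (snd e) = GY}.
      of_int (alpha w e) * x powi (fst e) * y powi (fst (snd e)))"

definition f_of :: "word \<Rightarrow> real \<Rightarrow> real" where
  "f_of w y = P_alpha w 1 y"

definition g_of :: "word \<Rightarrow> real \<Rightarrow> real" where
  "g_of w x = Q_alpha w x 1"

definition phi :: "nat \<Rightarrow> word \<Rightarrow> real" where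
  "phi k w = (deriv ^^ k) (f_of w) 1 / fact k"

definition psi :: "nat \<Rightarrow> word \<Rightarrow> real" where
  "psi k w = (deriv ^^ k) (g_of w) 1 / fact k"

fun G_set :: "nat \<Rightarrow> word \<Rightarrow> bool" where
  "G_set 0 w = in_comm w"
| "G_set (Suc k) w = (G_set k w \<and> phi (Suc k) w = 0)"

fun H_set :: "nat \<Rightarrow> word \<Rightarrow> bool" where
  "H_set 0 w = in_comm w"
| "H_set (Suc k) w = (H_set k w \<and> psi (Suc k) w = 0)"

end

theory Submission
  imports Defs "HOL-Computational_Algebra.Formal_Power_Series"
begin

(* The 1-chain of a word is determined by its element of F_2, and the path of a a b b consists of
  the path of a, a translate of it, and two translates of the path of b.  For g in the commutator
  subgroup the total displacement 2 disp(a) + 2 disp(b) vanishes, so the translates are arranged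
  such that f_g(y) = (1 + y^s) F(y) with F = f_a + y^s f_b, s being the y-displacement of a.
  The factor 1 + y^s equals 2 at y = 1 and is a unit there: if the Taylor coefficients of f_g at 1
  vanish below order k (order 0 is the x-displacement of g, the others by g in G_(k-1)), then so do
  those of F, and the k-th coefficient of f_g is twice that of F, an integer.  The same argument
  applies to g_g with x and y exchanged. *)

section \<open>Laurent polynomials as lists of terms\<close>

(* A pair (c, e) stands for the term c z^e; a list stands for the sum of its terms, so only its
  multiset of terms matters. *)
type_synonym laurent = "(int \<times> int) list"

definition weighted_sum :: "(int \<Rightarrow> 'a::comm_ring_1) \<Rightarrow> laurent \<Rightarrow> 'a" where
  "weighted_sum \<phi> L = (\<Sum>(c, e)\<leftarrow>L. of_int c * \<phi> e)"

definition shift_exps :: "int \<Rightarrow> laurent \<Rightarrow> laurent" where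
  "shift_exps s L = map (\<lambda>(c, e). (c, e + s)) L"

(* The k-th Taylor coefficient at z = 1, because z^e = (\<Sum>k. (e gchoose k) (z - 1)^k). *)
definition taylor_coeff :: "laurent \<Rightarrow> nat \<Rightarrow> real" where
  "taylor_coeff L k = weighted_sum (\<lambda>e. of_int e gchoose k) L"

lemma weighted_sum_Nil [simp]: "weighted_sum \<phi> [] = 0"
  by (simp add: weighted_sum_def)

lemma weighted_sum_Cons [simp]:
  "weighted_sum \<phi> ((c, e) # L) = of_int c * \<phi> e + weighted_sum \<phi> L"
  by (simp add: weighted_sum_def)

lemma weighted_sum_append [simp]:
  "weighted_sum \<phi> (L @ M) = weighted_sum \<phi> L + weighted_sum \<phi> M"
  by (simp add: weighted_sum_def)

lemma weighted_sum_shift_exps: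
  "weighted_sum \<phi> (shift_exps s L) = weighted_sum (\<lambda>e. \<phi> (e + s)) L"
  by (induction L) (auto simp: shift_exps_def)

lemma weighted_sum_sum:
  "weighted_sum (\<lambda>e. \<Sum>i\<in>A. f i e) L = (\<Sum>i\<in>A. weighted_sum (f i) L)"
  by (induction L) (auto simp: sum_distrib_left sum.distrib)

lemma weighted_sum_cmult: "weighted_sum (\<lambda>e. a * \<phi> e) L = a * weighted_sum \<phi> L"
  by (induction L) (auto simp: algebra_simps)

lemma shift_exps_append: "shift_exps s (L @ M) = shift_exps s L @ shift_exps s M"
  by (simp add: shift_exps_def)

lemma shift_exps_shift_exps: "shift_exps s (shift_exps t L) = shift_exps (t + s) L"
  by (simp add: shift_exps_def case_prod_beta add.assoc)

lemma taylor_coeff_append: "taylor_coeff (L @ M) k = taylor_coeff L k + taylor_coeff M k"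
  by (simp add: taylor_coeff_def)

lemma taylor_coeff_shift_exps:
  "taylor_coeff (shift_exps s L) k = (\<Sum>i = 0..k. (of_int s gchoose i) * taylor_coeff L (k - i))"
proof -
  have "(of_int (e + s) gchoose k :: real)
      = (\<Sum>i = 0..k. (of_int s gchoose i) * (of_int e gchoose (k - i)))" for e
    using gbinomial_Vandermonde[of "of_int s :: real" "of_int e" k] by (simp add: add.commute)
  then show ?thesis
    by (simp add: taylor_coeff_def weighted_sum_shift_exps weighted_sum_sum weighted_sum_cmult)
qed

lemma taylor_coeff_in_Ints: "taylor_coeff L k \<in> \<int>"
proof -
  have "(of_int e gchoose k :: real) \<in> \<int>" for e
    by (subst of_int_gbinomial[symmetric]) (rule Ints_of_int)
  then show ?thesis
    unfolding taylor_coeff_def by (induction L) auto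
qed

(* F(z) (1 + z^s) with 1 + z^s = 2 + O(z - 1): the lower coefficients of F vanish as well, by
  induction, and then only the constant 2 contributes to the k-th one. *)
lemma taylor_coeff_doubling:
  assumes "\<forall>i<k. taylor_coeff (F @ shift_exps s F) i = 0"
  shows "taylor_coeff (F @ shift_exps s F) k = 2 * taylor_coeff F k"
proof -
  define R where "R i = (\<Sum>j = 1..i. (of_int s gchoose j) * taylor_coeff F (i - j))" for i
  have expand: "taylor_coeff (F @ shift_exps s F) i = 2 * taylor_coeff F i + R i" for i
    by (simp add: taylor_coeff_append taylor_coeff_shift_exps R_def sum.atLeast_Suc_atMost)
  have lower: "taylor_coeff F i = 0" if "i < k" for i
    using that
  proof (induction i rule: less_induct)
    case (less i)
    have "R i = 0"
      unfolding R_def using less by (intro sum.neutral) auto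
    then show ?case
      using expand[of i] assms less.prems by simp
  qed
  have "R k = 0"
    unfolding R_def using lower by (intro sum.neutral) auto
  then show ?thesis
    using expand[of k] by simp
qed

lemma has_field_derivative_weighted_sum:
  assumes "\<And>e. (\<phi> e has_field_derivative \<phi>' e) (at z)"
  shows "((\<lambda>z. weighted_sum (\<lambda>e. \<phi> e z) L) has_field_derivative weighted_sum \<phi>' L) (at z)"
proof (induction L)
  case Nil
  then show ?case by simp
next
  case (Cons t L)
  then show ?case
    by (cases t) (auto intro!: derivative_eq_intros assms)
qed

lemma has_field_derivative_gchoose_powi:
  fixes z :: real
  assumes "z \<noteq> 0"
  shows "((\<lambda>z. (of_int e gchoose k) * z powi (e - k)) has_field_derivative
           of_nat (Suc k) * ((of_int e gchoose Suc k) * z powi (e - Suc k))) (at z)"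
proof -
  have "((\<lambda>z. z powi (e - k)) has_field_derivative of_int (e - k) * z powi (e - k - 1)) (at z)"
    using DERIV_power_int[OF DERIV_ident, where n = "e - int k" and x = z and s = UNIV] assms
    by simp
  from DERIV_cmult[OF this, where c = "of_int e gchoose k"]
  have "((\<lambda>z. (of_int e gchoose k) * z powi (e - k)) has_field_derivative
          (of_int e gchoose k) * of_int (e - k) * z powi (e - k - 1)) (at z)"
    by (simp add: mult.assoc)
  moreover have "of_nat (Suc k) * (of_int e gchoose Suc k)
      = (of_int e - of_nat k) * (of_int e gchoose k :: real)"
    by (metis gbinomial_absorption gbinomial_absorb_comp)
  then have "(of_int e gchoose k) * of_int (e - k) * z powi (e - k - 1)
      = of_nat (Suc k) * ((of_int e gchoose Suc k) * z powi (e - Suc k))"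
    unfolding mult.assoc[symmetric] by (simp add: mult.commute diff_diff_eq add.commute)
  ultimately show ?thesis
    by simp
qed

lemma higher_deriv_weighted_sum_powi:
  fixes z :: real
  assumes "z \<noteq> 0"
  shows "(deriv ^^ k) (\<lambda>z. weighted_sum (power_int z) L) z
           = fact k * weighted_sum (\<lambda>e. (of_int e gchoose k) * z powi (e - k)) L"
  using assms
proof (induction k arbitrary: z)
  case 0
  then show ?case by simp
next
  case (Suc k)
  let ?D = "\<lambda>k z. weighted_sum (\<lambda>e. (of_int e gchoose k) * z powi (e - k)) L"
  have "(?D k has_field_derivative
          weighted_sum (\<lambda>e. of_nat (Suc k) * ((of_int e gchoose Suc k) * z powi (e - Suc k))) L)
          (at z)"
    by (rule has_field_derivative_weighted_sum) (rule has_field_derivative_gchoose_powi[OF Suc.prems])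
  from DERIV_cmult[OF this, where c = "fact k"]
  have "((\<lambda>z. fact k * ?D k z) has_field_derivative fact (Suc k) * ?D (Suc k) z) (at z)"
    by (simp only: weighted_sum_cmult fact_Suc mult_ac)
  then have "((deriv ^^ k) (\<lambda>z. weighted_sum (power_int z) L)
          has_field_derivative fact (Suc k) * ?D (Suc k) z) (at z)"
    by (rule has_field_derivative_transform_within_open[where S = "- {0}"]) (use Suc in auto)
  then show ?case
    by (simp add: DERIV_imp_deriv)
qed

lemma taylor_coeff_eq_higher_deriv:
  "(deriv ^^ k) (\<lambda>z. weighted_sum (power_int z) L) 1 / fact k = taylor_coeff L k"
  by (simp add: higher_deriv_weighted_sum_powi taylor_coeff_def)

section \<open>Lattice paths of words\<close>

fun coord :: "gen \<Rightarrow> int \<times> int \<Rightarrow> int" where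
  "coord GX p = fst p"
| "coord GY p = snd p"

fun transverse :: "gen \<Rightarrow> int \<times> int \<Rightarrow> int" where
  "transverse GX p = snd p"
| "transverse GY p = fst p"

definition letter_sign :: "letter \<Rightarrow> int" where
  "letter_sign l = (if snd l then 1 else -1)"

fun letter_step :: "letter \<Rightarrow> int \<times> int" where
  "letter_step (GX, b) = (letter_sign (GX, b), 0)"
| "letter_step (GY, b) = (0, letter_sign (GY, b))"

definition displacement :: "word \<Rightarrow> int \<times> int" where
  "displacement w = (\<Sum>l\<leftarrow>w. letter_step l)"

lemma transverse_add [simp]: "transverse d (p + q) = transverse d p + transverse d q"
  by (cases d) simp_all

lemma transverse_zero [simp]: "transverse d 0 = 0"
  by (cases d) simp_all

lemma coord_zero [simp]: "coord d 0 = 0"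
  by (cases d) simp_all

lemma displacement_Nil [simp]: "displacement [] = 0"
  by (simp add: displacement_def)

lemma displacement_Cons [simp]: "displacement (l # w) = letter_step l + displacement w"
  by (simp add: displacement_def)

lemma displacement_append [simp]: "displacement (u @ v) = displacement u + displacement v"
  by (simp add: displacement_def)

lemma letter_step_inv_letter: "letter_step (inv_letter l) = - letter_step l"
  by (cases l rule: letter_step.cases) (simp_all add: inv_letter_def letter_sign_def)

lemma displacement_inv_word [simp]: "displacement (inv_word w) = - displacement w"
  by (induction w) (simp_all add: inv_word_def letter_step_inv_letter)

lemma displacement_cancel_pair: "displacement [l, inv_letter l] = 0"
  by (simp add: letter_step_inv_letter)

lemma free_eq_invariant:
  assumes "free_eq u v" and "\<And>u l v. F (u @ [l, inv_letter l] @ v) = F (u @ v)"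
  shows "F u = F v"
proof -
  have cancel: "F (u @ l # inv_letter l # v) = F (u @ v)" for u l v
    using assms(2) by simp
  show ?thesis
    using assms(1) unfolding free_eq_def
    by (induction rule: equivclp_induct) (auto elim!: cancel1.cases simp: cancel)
qed

lemma displacement_free_eq: "free_eq u v \<Longrightarrow> displacement u = displacement v"
  by (erule free_eq_invariant) (simp add: letter_step_inv_letter)

lemma in_comm_displacement:
  assumes "in_comm g"
  shows "displacement g = 0"
proof -
  obtain cs where "free_eq g (concat (map (\<lambda>(a, b). commutator a b) cs))"
    using assms unfolding in_comm_def by blast
  moreover have "displacement (concat (map (\<lambda>(a, b). commutator a b) cs)) = 0"
    by (induction cs) (auto simp: commutator_def)
  ultimately show ?thesis
    by (simp add: displacement_free_eq)
qed

section \<open>The polynomials f_g and g_g\<close>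

(* The terms of P_alpha(1, y) (for d = GX) resp. Q_alpha(x, 1) (for d = GY) contributed by the path
  of w started at p: an edge in direction d contributes its sign times the power of the coordinate
  transverse to d. *)
fun edge_terms :: "gen \<Rightarrow> int \<times> int \<Rightarrow> word \<Rightarrow> laurent" where
  "edge_terms d p [] = []"
| "edge_terms d p (l # w) =
     (if fst l = d then [(letter_sign l, transverse d p)] else [])
     @ edge_terms d (p + letter_step l) w"

lemma edge_terms_append:
  "edge_terms d p (u @ v) = edge_terms d p u @ edge_terms d (p + displacement u) v"
  by (induction u arbitrary: p) (simp_all add: add.assoc)

lemma edge_terms_shift: "edge_terms d p w = shift_exps (transverse d p) (edge_terms d 0 w)"
proof (induction w arbitrary: p)
  case Nil
  then show ?case by (simp add: shift_exps_def)
next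
  case (Cons l w)
  have "edge_terms d p (l # w) = (if fst l = d then [(letter_sign l, transverse d p)] else [])
      @ shift_exps (transverse d p + transverse d (letter_step l)) (edge_terms d 0 w)"
    by (simp add: Cons.IH[of "p + letter_step l"])
  moreover have "edge_terms d 0 (l # w) = (if fst l = d then [(letter_sign l, 0)] else [])
      @ shift_exps (transverse d (letter_step l)) (edge_terms d 0 w)"
    by (simp add: Cons.IH[of "letter_step l"])
  ultimately show ?case
    by (simp add: shift_exps_append shift_exps_shift_exps add.commute) (simp add: shift_exps_def)
qed

lemma edge_terms_append_origin:
  "edge_terms d 0 (u @ v)
     = edge_terms d 0 u @ shift_exps (transverse d (displacement u)) (edge_terms d 0 v)"
  by (simp add: edge_terms_append edge_terms_shift[of d "displacement u"])

lemma weighted_sum_edge_terms_cancel_pair: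
  "weighted_sum \<phi> (edge_terms d p [l, inv_letter l]) = 0"
  by (cases l rule: letter_step.cases; cases d) (simp_all add: inv_letter_def letter_sign_def)

lemma weighted_sum_edge_terms_free_eq:
  assumes "free_eq u v"
  shows "weighted_sum \<phi> (edge_terms d p u) = weighted_sum \<phi> (edge_terms d p v)"
  using assms
proof (rule free_eq_invariant)
  show "weighted_sum \<phi> (edge_terms d p (u @ [l, inv_letter l] @ v))
      = weighted_sum \<phi> (edge_terms d p (u @ v))" for u l v
    using weighted_sum_edge_terms_cancel_pair[of \<phi> d "p + displacement u" l]
    by (simp only: edge_terms_append displacement_append displacement_cancel_pair add_0_right
        weighted_sum_append add_0_left)
qed

lemma taylor_coeff_edge_terms_0:
  "taylor_coeff (edge_terms d p w) 0 = of_int (coord d (displacement w))"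
proof (induction w arbitrary: p)
  case Nil
  then show ?case by (simp add: taylor_coeff_def)
next
  case (Cons l w)
  show ?case
    using Cons.IH[of "p + letter_step l"]
    by (cases l rule: letter_step.cases; cases d) (simp_all add: taylor_coeff_def letter_sign_def)
qed

(* The four pieces are shifted by 0, s, 2 s and 2 s + t = s, where t = -s is the transverse
  displacement of b. *)
lemma weighted_sum_edge_terms_square_square:
  fixes d :: gen
  assumes "displacement (a @ a @ b @ b) = 0"
  defines "s \<equiv> transverse d (displacement a)"
  defines "F \<equiv> edge_terms d 0 a @ shift_exps s (edge_terms d 0 b)"
  shows "weighted_sum \<phi> (edge_terms d 0 (a @ a @ b @ b)) = weighted_sum \<phi> (F @ shift_exps s F)"
proof -
  have "transverse d (displacement b) = - s"
    using arg_cong[OF assms(1), of "transverse d"] by (simp add: s_def)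
  then show ?thesis
    by (simp add: edge_terms_append_origin s_def F_def shift_exps_append shift_exps_shift_exps
        algebra_simps)
qed

lemma taylor_coeff_square_square_even:
  assumes "in_comm g" and "free_eq g (a @ a @ b @ b)"
    and "\<forall>i\<in>{1..<k}. taylor_coeff (edge_terms d 0 g) i = 0"
  shows "\<exists>m::int. taylor_coeff (edge_terms d 0 g) k = 2 * of_int m"
proof -
  define s where "s = transverse d (displacement a)"
  define F where "F = edge_terms d 0 a @ shift_exps s (edge_terms d 0 b)"
  have disp_g: "displacement g = 0"
    using assms(1) by (rule in_comm_displacement)
  then have "displacement (a @ a @ b @ b) = 0"
    using displacement_free_eq[OF assms(2)] by simp
  from weighted_sum_edge_terms_square_square[OF this]
  have "weighted_sum \<phi> (edge_terms d 0 g) = weighted_sum \<phi> (F @ shift_exps s F)"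
    for \<phi> :: "int \<Rightarrow> real"
    unfolding s_def F_def weighted_sum_edge_terms_free_eq[OF assms(2)] .
  then have same: "taylor_coeff (edge_terms d 0 g) i = taylor_coeff (F @ shift_exps s F) i" for i
    by (simp add: taylor_coeff_def)
  have "taylor_coeff (F @ shift_exps s F) i = 0" if "i < k" for i
  proof (cases "i = 0")
    case True
    then show ?thesis
      using same[of 0] taylor_coeff_edge_terms_0[of d 0 g] disp_g by simp
  next
    case False
    then show ?thesis
      using same assms(3) that by simp
  qed
  then have "taylor_coeff (edge_terms d 0 g) k = 2 * taylor_coeff F k"
    using same taylor_coeff_doubling by simp
  moreover obtain m where "taylor_coeff F k = of_int m"
    using taylor_coeff_in_Ints by (blast elim: Ints_cases)
  ultimately show ?thesis
    by auto
qed

lemma step_edge_eq: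
  assumes "step_edge p l = (e, s, q)"
  shows "q = p + letter_step l \<and> snd (snd e) = fst l \<and> s = letter_sign l
    \<and> transverse (fst l) (fst e, fst (snd e)) = transverse (fst l) p"
  using assms
  by (cases p; cases l rule: letter_step.cases; cases "snd l") (auto simp: letter_sign_def)

lemma sum_chain_from_eq_weighted_sum:
  assumes "finite S" and "set (edges_from p w) \<subseteq> S"
  shows "(\<Sum>e\<in>{e\<in>S. snd (snd e) = d}.
            of_int (chain_from p w e) * z powi transverse d (fst e, fst (snd e)))
           = weighted_sum (power_int z) (edge_terms d p w)"
  using assms(2)
proof (induction w arbitrary: p)
  case Nil
  then show ?case by simp
next
  case (Cons l w)
  obtain e s q where step: "step_edge p l = (e, s, q)"
    by (metis prod_cases3)
  note edge = step_edge_eq[OF step]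
  let ?S = "{e\<in>S. snd (snd e) = d}"
  let ?mon = "\<lambda>e. z powi transverse d (fst e, fst (snd e))"
  let ?head = "if snd (snd e) = d then of_int s * ?mon e else 0"
  have "e \<in> S" and sub: "set (edges_from q w) \<subseteq> S"
    using Cons.prems step by auto
  have chain: "chain_from p (l # w) e' = (if e' = e then s else 0) + chain_from q w e'" for e'
    using step by simp
  have "(\<Sum>e'\<in>?S. of_int (chain_from p (l # w) e') * ?mon e')
      = (\<Sum>e'\<in>?S. (if e' = e then of_int s * ?mon e else 0) + of_int (chain_from q w e') * ?mon e')"
    by (intro sum.cong refl) (simp add: chain distrib_right del: chain_from.simps)
  also have "\<dots> = (\<Sum>e'\<in>?S. if e' = e then of_int s * ?mon e else 0)
      + (\<Sum>e'\<in>?S. of_int (chain_from q w e') * ?mon e')"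
    by (rule sum.distrib)
  also have "(\<Sum>e'\<in>?S. if e' = e then of_int s * ?mon e else 0) = ?head"
    using \<open>e \<in> S\<close> assms(1) by (simp add: sum.delta)
  also have "(\<Sum>e'\<in>?S. of_int (chain_from q w e') * ?mon e')
      = weighted_sum (power_int z) (edge_terms d q w)"
    by (rule Cons.IH[OF sub])
  also have "?head + weighted_sum (power_int z) (edge_terms d q w)
      = weighted_sum (power_int z) (edge_terms d p (l # w))"
  proof (cases "fst l = d")
    case True
    then show ?thesis
      using edge by simp
  next
    case False
    then show ?thesis
      using edge by simp
  qed
  finally show ?case .
qed

lemma sum_alpha_eq_weighted_sum:
  "(\<Sum>e\<in>{e \<in> set (edges_from (0, 0) w). snd (snd e) = d}.
      of_int (alpha w e) * z powi transverse d (fst e, fst (snd e)))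
     = weighted_sum (power_int z) (edge_terms d 0 w)"
  unfolding alpha_def zero_prod_def by (rule sum_chain_from_eq_weighted_sum) auto

lemma f_of_eq_weighted_sum: "f_of w = (\<lambda>z. weighted_sum (power_int z) (edge_terms GX 0 w))"
  unfolding sum_alpha_eq_weighted_sum[symmetric] by (simp add: fun_eq_iff f_of_def P_alpha_def)

lemma g_of_eq_weighted_sum: "g_of w = (\<lambda>z. weighted_sum (power_int z) (edge_terms GY 0 w))"
  unfolding sum_alpha_eq_weighted_sum[symmetric] by (simp add: fun_eq_iff g_of_def Q_alpha_def)

lemma phi_eq_taylor_coeff: "phi k w = taylor_coeff (edge_terms GX 0 w) k"
  by (simp add: phi_def f_of_eq_weighted_sum taylor_coeff_eq_higher_deriv)

lemma psi_eq_taylor_coeff: "psi k w = taylor_coeff (edge_terms GY 0 w) k"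
  by (simp add: psi_def g_of_eq_weighted_sum taylor_coeff_eq_higher_deriv)

lemma G_set_in_comm: "G_set n g \<Longrightarrow> in_comm g"
  by (induction n) auto

lemma H_set_in_comm: "H_set n g \<Longrightarrow> in_comm g"
  by (induction n) auto

lemma G_set_phi_eq_0: "G_set n g \<Longrightarrow> i \<in> {1..n} \<Longrightarrow> phi i g = 0"
  by (induction n) (auto simp: le_Suc_eq)

lemma H_set_psi_eq_0: "H_set n g \<Longrightarrow> i \<in> {1..n} \<Longrightarrow> psi i g = 0"
  by (induction n) (auto simp: le_Suc_eq)

theorem lemma3p4:
  fixes k :: nat
  assumes "k \<ge> 1"
  shows "(\<forall>g a b :: word. G_set (k - 1) g \<and> free_eq g (a @ a @ b @ b)
            \<longrightarrow> (\<exists>m::int. phi k g = 2 * of_int m))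
       \<and> (\<forall>g a b :: word. H_set (k - 1) g \<and> free_eq g (a @ a @ b @ b)
            \<longrightarrow> (\<exists>m::int. psi k g = 2 * of_int m))"
proof (intro conjI allI impI; elim conjE)
  fix g a b :: word
  assume G: "G_set (k - 1) g" and "free_eq g (a @ a @ b @ b)"
  moreover have "\<forall>i\<in>{1..<k}. taylor_coeff (edge_terms GX 0 g) i = 0"
    using G_set_phi_eq_0[OF G] by (auto simp: phi_eq_taylor_coeff)
  ultimately show "\<exists>m::int. phi k g = 2 * of_int m"
    using taylor_coeff_square_square_even G_set_in_comm by (simp add: phi_eq_taylor_coeff)
next
  fix g a b :: word
  assume H: "H_set (k - 1) g" and "free_eq g (a @ a @ b @ b)"
  moreover have "\<forall>i\<in>{1..<k}. taylor_coeff (edge_terms GY 0 g) i = 0"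
    using H_set_psi_eq_0[OF H] by (auto simp: psi_eq_taylor_coeff)
  ultimately show "\<exists>m::int. psi k g = 2 * of_int m"
    using taylor_coeff_square_square_even H_set_in_comm by (simp add: psi_eq_taylor_coeff)
qed

end
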